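(* Let $P$ be the uniform probability distribution on the equilateral triangle with vertices $(0,0)$, $(1,0)$, $(\frac12,\frac{\sqrt3}{2})$. Then, as $n\to\infty$, the $n$th quantization error satisfies $V_n(P)\le \frac{5}{72n}+O(n^{-3/2})$.
   Context: For a Borel probability measure $P$ on $\mathbb R^2$ with finite second moment and $n\ge1$, the $n$th quantization error is $V_n(P)=\inf\{\int \min_{a\in\alpha}\|x-a\|^2\,dP(x): \alpha\subset\mathbb R^2,\ \mathrm{card}(\alpha)\le n\}$, where $\|\cdot\|$ is the Euclidean norm. The uniform distribution on the triangle has density $\frac{4}{\sqrt3}$ on the triangle and $0$ elsewhere. The statement means: there is a constant $C$ such that $V_n(P)\le \frac{5}{72n}+Cn^{-3/2}$ for all sufficiently large $n$. *)

theory Defs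
  imports "HOL-Analysis.Analysis"
begin

definition triangle :: "(real \<times> real) set" where
  "triangle = convex hull {(0, 0), (1, 0), (1/2, sqrt 3 / 2)}"

definition unif_triangle :: "(real \<times> real) measure" where
  "unif_triangle = density lborel (\<lambda>x. ennreal (4 / sqrt 3 * indicator triangle x))"

definition distortion :: "(real \<times> real) measure \<Rightarrow> (real \<times> real) set \<Rightarrow> real" where
  "distortion P \<alpha> = (\<integral>x. Min ((\<lambda>a. (norm (x - a))\<^sup>2) ` \<alpha>) \<partial>P)"

definition quant_error :: "(real \<times> real) measure \<Rightarrow> nat \<Rightarrow> real" where
  "quant_error P n = Inf {distortion P \<alpha> | \<alpha>. finite \<alpha> \<and> \<alpha> \<noteq> {} \<and> card \<alpha> \<le> n}"

end

theory Submission
  imports Defs "HOL-Real_Asymp.Real_Asymp"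
begin

text \<open>In skew coordinates along two edges, the triangle scaled by m becomes the lattice simplex
  {u, v \<ge> 0, u + v \<le> m} and the squared distance becomes u^2 + u v + v^2 divided by m^2.
  The lattice points (i, j) with i = j (mod 3) are the centres of a hexagonal tiling; about m^2/6
  of them cover the scaled triangle. Every unit cell of the lattice has a codebook point at a
  corner, in one of three patterns according to its residue class, so the squared distance to
  the codebook is bounded by an explicit kernel whose integral over a cell is 5/12 in every
  class. Summing over the (m + 1)(m + 2)/2 cells and undoing the change of variables bounds the
  distortion by 5 (m + 1)(m + 2) / (12 m^4); taking m close to sqrt (6 n) - 8 turns this into
  5/(72 n) + O(n powr (-3/2)).\<close>

section \<open>Fubini and triangular changes of variables in the plane\<close>

lemma nn_integral_lborel_pair:
  fixes f :: "real \<times> real \<Rightarrow> ennreal"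
  assumes [measurable]: "f \<in> borel_measurable borel"
  shows "(\<integral>\<^sup>+z. f z \<partial>lborel) = (\<integral>\<^sup>+s. (\<integral>\<^sup>+t. f (t, s) \<partial>lborel) \<partial>lborel)"
proof -
  have [measurable]: "f \<in> borel_measurable (lborel \<Otimes>\<^sub>M lborel)"
    by (simp add: lborel_prod)
  show ?thesis
    by (subst lborel_pair.nn_integral_snd) (simp_all add: lborel_prod)
qed

lemma nn_integral_lborel_affine_inv:
  fixes f :: "real \<Rightarrow> ennreal"
  assumes [measurable]: "f \<in> borel_measurable borel" and "c \<noteq> 0"
  shows "(\<integral>\<^sup>+x. f (t + c * x) \<partial>lborel) = ennreal (1 / \<bar>c\<bar>) * (\<integral>\<^sup>+x. f x \<partial>lborel)"
proof -
  have "ennreal (1 / \<bar>c\<bar>) * (\<integral>\<^sup>+x. f x \<partial>lborel)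
      = (ennreal (1 / \<bar>c\<bar>) * ennreal \<bar>c\<bar>) * (\<integral>\<^sup>+x. f (t + c * x) \<partial>lborel)"
    using nn_integral_real_affine[OF assms, of t] by (simp add: mult.assoc)
  also have "ennreal (1 / \<bar>c\<bar>) * ennreal \<bar>c\<bar> = 1"
    using assms(2) by (simp flip: ennreal_mult)
  finally show ?thesis by simp
qed

lemma nn_integral_lborel_upper_triangular:
  fixes F :: "real \<times> real \<Rightarrow> ennreal"
  assumes [measurable]: "F \<in> borel_measurable borel" and a: "a \<noteq> 0" and d: "d \<noteq> 0"
  shows "(\<integral>\<^sup>+x. F (a * fst x + b * snd x, d * snd x) \<partial>lborel) = ennreal (1 / \<bar>a * d\<bar>) * (\<integral>\<^sup>+y. F y \<partial>lborel)"
proof -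
  have [measurable]: "(\<lambda>x. F (a * fst x + b * snd x, d * snd x)) \<in> borel_measurable borel"
    by (subst borel_prod[symmetric]) measurable
  have "(\<integral>\<^sup>+x. F (a * fst x + b * snd x, d * snd x) \<partial>lborel)
      = (\<integral>\<^sup>+s. (\<integral>\<^sup>+t. F (b * s + a * t, d * s) \<partial>lborel) \<partial>lborel)"
    by (subst nn_integral_lborel_pair) (simp_all add: add.commute)
  also have "\<dots> = (\<integral>\<^sup>+s. ennreal (1 / \<bar>a\<bar>) * (\<integral>\<^sup>+t. F (t, 0 + d * s) \<partial>lborel) \<partial>lborel)"
    using a by (subst nn_integral_lborel_affine_inv[where f = "\<lambda>t. F (t, _)"]) simp_all
  also have "\<dots> = ennreal (1 / \<bar>a\<bar>) * (ennreal (1 / \<bar>d\<bar>) * (\<integral>\<^sup>+s. (\<integral>\<^sup>+t. F (t, s) \<partial>lborel) \<partial>lborel))"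
  proof -
    have [measurable]: "F \<in> borel_measurable (lborel \<Otimes>\<^sub>M lborel)"
      by (simp add: lborel_prod)
    have "(\<lambda>s. \<integral>\<^sup>+t. F (t, s) \<partial>lborel) \<in> borel_measurable lborel"
      by measurable
    then have [measurable]: "(\<lambda>s. \<integral>\<^sup>+t. F (t, s) \<partial>lborel) \<in> borel_measurable borel"
      by simp
    show ?thesis
      using d nn_integral_lborel_affine_inv[where f = "\<lambda>s. \<integral>\<^sup>+t. F (t, s) \<partial>lborel" and t = 0]
      by (simp add: nn_integral_cmult)
  qed
  also have "\<dots> = ennreal (1 / \<bar>a * d\<bar>) * (\<integral>\<^sup>+y. F y \<partial>lborel)"
  proof -
    have "ennreal (1 / \<bar>a\<bar>) * ennreal (1 / \<bar>d\<bar>) = ennreal (1 / \<bar>a * d\<bar>)"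
      by (simp add: abs_mult flip: ennreal_mult)
    then show ?thesis by (simp add: nn_integral_lborel_pair flip: mult.assoc)
  qed
  finally show ?thesis .
qed

lemma nn_integral_lborel_translate:
  fixes f :: "'a::euclidean_space \<Rightarrow> ennreal"
  assumes [measurable]: "f \<in> borel_measurable borel"
  shows "(\<integral>\<^sup>+y. f (y - c) \<partial>lborel) = (\<integral>\<^sup>+y. f y \<partial>lborel)"
proof -
  have "(\<integral>\<^sup>+y. f y \<partial>lborel) = (\<integral>\<^sup>+y. f y \<partial>distr lborel borel ((+) (- c)))"
    by (simp add: lborel_distr_plus)
  also have "\<dots> = (\<integral>\<^sup>+y. f (- c + y) \<partial>lborel)"
    by (subst nn_integral_distr) auto
  finally show ?thesis by simp
qed

section \<open>Skew coordinates\<close>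

text \<open>In the basis (1, 0), (1/2, sqrt 3 / 2) spanned by two edges of the triangle the squared
  Euclidean norm of u e1 + v e2 is u^2 + u v + v^2.\<close>

definition skew_sqnorm :: "real \<times> real \<Rightarrow> real" where
  "skew_sqnorm z = (fst z)\<^sup>2 + fst z * snd z + (snd z)\<^sup>2"

lemma skew_sqnorm_nonneg: "0 \<le> skew_sqnorm z"
proof -
  have "skew_sqnorm z = (fst z + snd z / 2)\<^sup>2 + 3/4 * (snd z)\<^sup>2"
    by (simp add: skew_sqnorm_def power2_eq_square algebra_simps)
  then show ?thesis by simp
qed

lemma skew_sqnorm_measurable [measurable]: "skew_sqnorm \<in> borel_measurable borel"
  unfolding skew_sqnorm_def by (subst borel_prod[symmetric]) measurable

lemma skew_sqnorm_scaleR: "skew_sqnorm (a *\<^sub>R z) = a\<^sup>2 * skew_sqnorm z"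
  by (simp add: skew_sqnorm_def power2_eq_square algebra_simps)

definition skew :: "real \<times> real \<Rightarrow> real \<times> real" where
  "skew x = (fst x - snd x / sqrt 3, 2 * snd x / sqrt 3)"

definition unskew :: "real \<times> real \<Rightarrow> real \<times> real" where
  "unskew c = (fst c + snd c / 2, sqrt 3 / 2 * snd c)"

lemma unskew_skew [simp]: "unskew (skew x) = x"
  by (simp add: skew_def unskew_def field_simps)

lemma unskew_diff: "unskew (c - d) = unskew c - unskew d"
  by (simp add: unskew_def algebra_simps diff_divide_distrib)

lemma unskew_scaleR: "unskew (a *\<^sub>R c) = a *\<^sub>R unskew c"
  by (simp add: unskew_def algebra_simps)

lemma norm_unskew_sq: "(norm (unskew c))\<^sup>2 = skew_sqnorm c"
proof -
  have "(norm (unskew c))\<^sup>2 = (fst c + snd c / 2)\<^sup>2 + (sqrt 3 / 2 * snd c)\<^sup>2"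
    by (simp add: unskew_def norm_Pair power_divide)
  then show ?thesis by (simp add: skew_sqnorm_def power2_eq_square field_simps)
qed

lemma sqdist_scaled_unskew:
  assumes "m \<noteq> 0"
  shows "(norm (x - (1 / m) *\<^sub>R unskew c))\<^sup>2 = skew_sqnorm (m *\<^sub>R skew x - c) / m\<^sup>2"
proof -
  have "x - (1 / m) *\<^sub>R unskew c = unskew ((1 / m) *\<^sub>R (m *\<^sub>R skew x - c))"
    using assms by (simp add: unskew_diff unskew_scaleR algebra_simps)
  then show ?thesis
    by (simp add: norm_unskew_sq skew_sqnorm_scaleR power_divide)
qed

lemma skew_triangle:
  assumes "x \<in> triangle"
  shows "0 \<le> fst (skew x) \<and> 0 \<le> snd (skew x) \<and> fst (skew x) + snd (skew x) \<le> 1"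
proof -
  from assms obtain u v w where "0 \<le> u" "0 \<le> v" "0 \<le> w" "u + v + w = 1"
    and "x = u *\<^sub>R (0, 0) + v *\<^sub>R (1, 0) + w *\<^sub>R (1/2, sqrt 3 / 2)"
    unfolding triangle_def convex_hull_3 by blast
  then show ?thesis by (simp add: skew_def)
qed

lemma nn_integral_scaled_skew:
  fixes F :: "real \<times> real \<Rightarrow> ennreal"
  assumes [measurable]: "F \<in> borel_measurable borel" and m: "m > 0"
  shows "(\<integral>\<^sup>+x. F (m *\<^sub>R skew x) \<partial>lborel) = ennreal (sqrt 3 / (2 * m\<^sup>2)) * (\<integral>\<^sup>+y. F y \<partial>lborel)"
proof -
  have "(\<lambda>x. F (m *\<^sub>R skew x)) = (\<lambda>x. F (m * fst x + (- m / sqrt 3) * snd x, (2 * m / sqrt 3) * snd x))"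
    by (simp add: skew_def algebra_simps)
  then show ?thesis
    using m nn_integral_lborel_upper_triangular[of F m "2 * m / sqrt 3" "- m / sqrt 3"]
    by (simp add: power2_eq_square ac_simps)
qed

section \<open>The quadratic form integrated over lattice cells\<close>

definition segment_moment :: "real \<Rightarrow> real \<Rightarrow> real \<Rightarrow> real" where
  "segment_moment d a b = (b^3 - a^3) / 3 + (b\<^sup>2 - a\<^sup>2) * d / 2 + (b - a) * d\<^sup>2"

lemma segment_moment_nonneg:
  assumes "a \<le> b"
  shows "0 \<le> segment_moment d a b"
proof -
  have "segment_moment d a b = (b - a) * ((a - b)\<^sup>2 / 12 + ((a + b + d) / 2)\<^sup>2 + 3/4 * d\<^sup>2)"
    by (simp add: segment_moment_def power2_eq_square power3_eq_cube field_simps)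
  with assms show ?thesis by simp
qed

lemma nn_integral_skew_sqnorm_segment:
  assumes "lo \<le> hi"
  shows "(\<integral>\<^sup>+t. ennreal (skew_sqnorm (t - c, d)) * indicator {lo..hi} t \<partial>lborel)
       = ennreal (segment_moment d (lo - c) (hi - c))"
proof -
  define F where "F t = (t - c)^3 / 3 + (t - c)\<^sup>2 * d / 2 + (t - c) * d\<^sup>2" for t
  have "(\<integral>\<^sup>+t. ennreal (skew_sqnorm (t - c, d)) * indicator {lo..hi} t \<partial>lborel) = ennreal (F hi - F lo)"
  proof (rule nn_integral_FTC_Icc)
    show "(F has_real_derivative skew_sqnorm (t - c, d)) (at t)" for t
      unfolding F_def skew_sqnorm_def
      by (auto intro!: derivative_eq_intros simp: power2_eq_square field_simps)
  qed (use assms skew_sqnorm_nonneg in auto)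
  then show ?thesis by (simp add: F_def segment_moment_def algebra_simps diff_divide_distrib)
qed

definition region_between :: "(real \<Rightarrow> real) \<Rightarrow> (real \<Rightarrow> real) \<Rightarrow> (real \<times> real) set" where
  "region_between lo hi = {z. snd z \<in> {0..1} \<and> fst z \<in> {lo (snd z)..hi (snd z)}}"

lemma region_between_measurable [measurable]:
  assumes [measurable]: "lo \<in> borel_measurable borel" "hi \<in> borel_measurable borel"
  shows "region_between lo hi \<in> sets borel"
proof -
  have "{z \<in> space (borel \<Otimes>\<^sub>M borel). 0 \<le> snd z \<and> snd z \<le> 1 \<and> lo (snd z) \<le> fst z \<and> fst z \<le> hi (snd z)}
      \<in> sets (borel \<Otimes>\<^sub>M borel)"
    by measurable
  from this[unfolded borel_prod] show ?thesis by (simp add: region_between_def)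
qed

lemma nn_integral_skew_sqnorm_region_slice:
  assumes lo_hi: "\<And>s. s \<in> {0..1} \<Longrightarrow> lo s \<le> hi s"
  shows "(\<integral>\<^sup>+t. ennreal (skew_sqnorm ((t, s) - c)) * indicator (region_between lo hi) (t, s) \<partial>lborel)
       = ennreal (segment_moment (s - snd c) (lo s - fst c) (hi s - fst c)) * indicator {0..1} s"
proof (cases "s \<in> {0..1}")
  case True
  then have "(\<integral>\<^sup>+t. ennreal (skew_sqnorm ((t, s) - c)) * indicator (region_between lo hi) (t, s) \<partial>lborel)
      = (\<integral>\<^sup>+t. ennreal (skew_sqnorm (t - fst c, s - snd c)) * indicator {lo s..hi s} t \<partial>lborel)"
    by (intro nn_integral_cong) (auto simp: region_between_def indicator_def minus_prod_def)
  with True lo_hi show ?thesis by (simp add: nn_integral_skew_sqnorm_segment)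
next
  case False
  then have "(\<lambda>t. ennreal (skew_sqnorm ((t, s) - c)) * indicator (region_between lo hi) (t, s)) = (\<lambda>_. 0)"
    by (auto simp: region_between_def)
  with False show ?thesis by simp
qed

lemma nn_integral_skew_sqnorm_region:
  assumes [measurable]: "lo \<in> borel_measurable borel" "hi \<in> borel_measurable borel"
    and lo_hi: "\<And>s. s \<in> {0..1} \<Longrightarrow> lo s \<le> hi s"
    and P: "\<And>s. (P has_real_derivative segment_moment (s - snd c) (lo s - fst c) (hi s - fst c)) (at s)"
  shows "(\<integral>\<^sup>+z. ennreal (skew_sqnorm (z - c)) * indicator (region_between lo hi) z \<partial>lborel)
       = ennreal (P 1 - P 0)"
proof -
  have "(\<integral>\<^sup>+z. ennreal (skew_sqnorm (z - c)) * indicator (region_between lo hi) z \<partial>lborel)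
      = (\<integral>\<^sup>+s. (\<integral>\<^sup>+t. ennreal (skew_sqnorm ((t, s) - c)) * indicator (region_between lo hi) (t, s) \<partial>lborel) \<partial>lborel)"
    by (rule nn_integral_lborel_pair) measurable
  also have "\<dots> = (\<integral>\<^sup>+s. ennreal (segment_moment (s - snd c) (lo s - fst c) (hi s - fst c)) * indicator {0..1} s \<partial>lborel)"
    by (intro nn_integral_cong nn_integral_skew_sqnorm_region_slice lo_hi)
  also have "\<dots> = ennreal (P 1 - P 0)"
  proof (rule nn_integral_FTC_Icc)
    show "(\<lambda>s. segment_moment (s - snd c) (lo s - fst c) (hi s - fst c)) \<in> borel_measurable borel"
      unfolding segment_moment_def by measurable
  qed (use P lo_hi segment_moment_nonneg in auto)
  finally show ?thesis .
qed

text \<open>Bound for the squared skew distance from a point z of the unit cell to the codebook corners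
  of the cell, which depend on the class r of its lower left corner: (0, 0) and (1, 1) for
  r = 0, (0, 1) for r = 1 and (1, 0) for r = 2.\<close>
definition cell_kernel :: "nat \<Rightarrow> real \<times> real \<Rightarrow> ennreal" where
  "cell_kernel r z =
     (if r = 0 then ennreal (skew_sqnorm z) * indicator (region_between (\<lambda>_. 0) (\<lambda>s. 1 - s)) z
                  + ennreal (skew_sqnorm (z - (1, 1))) * indicator (region_between (\<lambda>s. 1 - s) (\<lambda>_. 1)) z
      else ennreal (skew_sqnorm (z - (if r = 1 then (0, 1) else (1, 0))))
             * indicator (region_between (\<lambda>_. 0) (\<lambda>_. 1)) z)"

lemma cell_kernel_measurable [measurable]: "cell_kernel r \<in> borel_measurable borel"
  unfolding cell_kernel_def by measurable

lemma nn_integral_cell_kernel: "(\<integral>\<^sup>+z. cell_kernel r z \<partial>lborel) = ennreal (5/12)"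
proof -
  have lower: "(\<integral>\<^sup>+z. ennreal (skew_sqnorm (z - (0, 0))) * indicator (region_between (\<lambda>_. 0) (\<lambda>s. 1 - s)) z \<partial>lborel)
      = ennreal (5/24)"
    by (subst nn_integral_skew_sqnorm_region[where P = "\<lambda>s. s/3 - s\<^sup>2/4 + s^3/3 - 5 * s^4/24"])
       (auto intro!: derivative_eq_intros simp: segment_moment_def power2_eq_square power3_eq_cube field_simps)
  have upper: "(\<integral>\<^sup>+z. ennreal (skew_sqnorm (z - (1, 1))) * indicator (region_between (\<lambda>s. 1 - s) (\<lambda>_. 1)) z \<partial>lborel)
      = ennreal (5/24)"
    by (subst nn_integral_skew_sqnorm_region[where P = "\<lambda>s. 5 * s^4/24 - s^3/2 + s\<^sup>2/2"])
       (auto intro!: derivative_eq_intros simp: segment_moment_def power2_eq_square power3_eq_cube field_simps)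
  have square_01: "(\<integral>\<^sup>+z. ennreal (skew_sqnorm (z - (0, 1))) * indicator (region_between (\<lambda>_. 0) (\<lambda>_. 1)) z \<partial>lborel)
      = ennreal (5/12)"
    by (subst nn_integral_skew_sqnorm_region[where P = "\<lambda>s. s/3 + (s - 1)\<^sup>2/4 + (s - 1)^3/3"])
       (auto intro!: derivative_eq_intros simp: segment_moment_def power2_eq_square power3_eq_cube field_simps)
  have square_10: "(\<integral>\<^sup>+z. ennreal (skew_sqnorm (z - (1, 0))) * indicator (region_between (\<lambda>_. 0) (\<lambda>_. 1)) z \<partial>lborel)
      = ennreal (5/12)"
    by (subst nn_integral_skew_sqnorm_region[where P = "\<lambda>s. s/3 - s\<^sup>2/4 + s^3/3"])
       (auto intro!: derivative_eq_intros simp: segment_moment_def power2_eq_square power3_eq_cube field_simps)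
  show ?thesis
  proof (cases "r = 0")
    case True
    then have "(\<integral>\<^sup>+z. cell_kernel r z \<partial>lborel) = ennreal (5/24) + ennreal (5/24)"
      using lower upper by (simp add: cell_kernel_def nn_integral_add flip: zero_prod_def)
    then show ?thesis by (simp flip: ennreal_plus)
  qed (auto simp: cell_kernel_def square_01 square_10)
qed

lemma cell_kernel_cover:
  assumes z: "z \<in> {0..1} \<times> {0..1}" and r: "r < 3"
  obtains i j :: nat where "i \<le> 1" "j \<le> 1" "(r + i + 2 * j) mod 3 = 0"
    "ennreal (skew_sqnorm (z - (real i, real j))) \<le> cell_kernel r z"
proof -
  consider "r = 0" "fst z + snd z \<le> 1" | "r = 0" "1 \<le> fst z + snd z" | "r = 1" | "r = 2"
    using r by linarith
  then show ?thesis
  proof cases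
    case 1
    with z have "ennreal (skew_sqnorm (z - (0, 0))) \<le> cell_kernel r z"
      by (auto simp: cell_kernel_def region_between_def simp flip: zero_prod_def)
    with 1 that[of 0 0] show ?thesis by simp
  next
    case 2
    with z have "ennreal (skew_sqnorm (z - (1, 1))) \<le> cell_kernel r z"
      by (auto simp: cell_kernel_def region_between_def)
    with 2 that[of 1 1] show ?thesis by simp
  next
    case 3
    with z have "ennreal (skew_sqnorm (z - (0, 1))) \<le> cell_kernel r z"
      by (auto simp: cell_kernel_def region_between_def)
    with 3 that[of 0 1] show ?thesis by simp
  next
    case 4
    with z have "ennreal (skew_sqnorm (z - (1, 0))) \<le> cell_kernel r z"
      by (auto simp: cell_kernel_def region_between_def)
    with 4 that[of 1 0] show ?thesis by simp
  qed
qed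

section \<open>The hexagonal codebook\<close>

lemma mod_3_eq_if_add_double:
  assumes "(x + 2 * y) mod 3 = (0::nat)"
  shows "x mod 3 = y mod 3"
proof -
  have "x mod 3 = (x + 2 * y + y) mod 3" by simp
  also have "\<dots> = ((x + 2 * y) mod 3 + y) mod 3" by (simp only: mod_add_left_eq)
  finally show ?thesis using assms by simp
qed

definition hex_index :: "nat \<Rightarrow> (nat \<times> nat) set" where
  "hex_index M = {(i, j). i + j \<le> M \<and> i mod 3 = j mod 3}"

text \<open>The points i = j (mod 3) of the triangular lattice of mesh 1/m form a triangular lattice of
  mesh sqrt 3 / m, i.e.\ the centres of a hexagonal tiling; indices up to m + 2 reach every
  corner needed by the cells of the scaled triangle.\<close>
definition hex_codebook :: "nat \<Rightarrow> (real \<times> real) set" where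
  "hex_codebook m = (\<lambda>(i, j). (1 / real m) *\<^sub>R unskew (real i, real j)) ` hex_index (m + 2)"

definition simplex_cells :: "nat \<Rightarrow> (nat \<times> nat) set" where
  "simplex_cells m = {(a, b). a + b \<le> m}"

text \<open>(a + 2 b) mod 3 is the class (a - b) mod 3, written without truncated subtraction.\<close>
definition cover_kernel :: "nat \<Rightarrow> real \<times> real \<Rightarrow> ennreal" where
  "cover_kernel m y = (\<Sum>(a, b)\<in>simplex_cells m. cell_kernel ((a + 2 * b) mod 3) (y - (real a, real b)))"

lemma finite_hex_index: "finite (hex_index M)"
  by (rule finite_subset[of _ "{..M} \<times> {..M}"]) (auto simp: hex_index_def)

lemma finite_simplex_cells: "finite (simplex_cells m)"
  by (rule finite_subset[of _ "{..m} \<times> {..m}"]) (auto simp: simplex_cells_def)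

lemma finite_hex_codebook: "finite (hex_codebook m)"
  by (simp add: hex_codebook_def finite_hex_index)

lemma hex_codebook_nonempty: "hex_codebook m \<noteq> {}"
proof -
  have "(0, 0) \<in> hex_index (m + 2)" by (simp add: hex_index_def)
  then show ?thesis unfolding hex_codebook_def by blast
qed

lemma simplex_cell_containing:
  assumes "0 \<le> fst y" "0 \<le> snd y" "fst y + snd y \<le> real m"
  obtains a b where "(a, b) \<in> simplex_cells m" "y - (real a, real b) \<in> {0..1} \<times> {0..1}"
proof -
  define a where "a = nat \<lfloor>fst y\<rfloor>"
  define b where "b = nat \<lfloor>snd y\<rfloor>"
  have a: "real a \<le> fst y" "fst y < real a + 1" and b: "real b \<le> snd y" "snd y < real b + 1"
    using assms unfolding a_def b_def by linarith+
  then have "(a, b) \<in> simplex_cells m"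
    using assms unfolding simplex_cells_def by simp
  moreover have "y - (real a, real b) \<in> {0..1} \<times> {0..1}"
    using a b by (cases y) auto
  ultimately show ?thesis by (rule that)
qed

lemma hex_index_cell_corner:
  assumes "(a, b) \<in> simplex_cells m" "i \<le> 1" "j \<le> 1" "((a + 2 * b) mod 3 + i + 2 * j) mod 3 = 0"
  shows "(a + i, b + j) \<in> hex_index (m + 2)"
proof -
  have "(a + i) + 2 * (b + j) = (a + 2 * b) + (i + 2 * j)" by simp
  with assms(4) have "((a + i) + 2 * (b + j)) mod 3 = 0" by (simp only: mod_add_left_eq add.assoc)
  then have "(a + i) mod 3 = (b + j) mod 3" by (rule mod_3_eq_if_add_double)
  with assms(1-3) show ?thesis
    by (simp add: hex_index_def simplex_cells_def)
qed

lemma sqdist_hex_codebook_le_cover_kernel: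
  assumes m: "m \<ge> 1" and x: "x \<in> triangle"
  shows "ennreal (Min ((\<lambda>p. (norm (x - p))\<^sup>2) ` hex_codebook m))
       \<le> ennreal (1 / (real m)\<^sup>2) * cover_kernel m (real m *\<^sub>R skew x)"
proof -
  define y where "y = real m *\<^sub>R skew x"
  have "0 \<le> fst y" "0 \<le> snd y" "fst y + snd y \<le> real m"
    using skew_triangle[OF x] m by (auto simp: y_def simp flip: distrib_left intro: mult_left_le)
  then obtain a b where ab: "(a, b) \<in> simplex_cells m" and z: "y - (real a, real b) \<in> {0..1} \<times> {0..1}"
    by (rule simplex_cell_containing)
  define z where "z = y - (real a, real b)"
  obtain i j :: nat where ij: "i \<le> 1" "j \<le> 1" "((a + 2 * b) mod 3 + i + 2 * j) mod 3 = 0"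
    and cover: "ennreal (skew_sqnorm (z - (real i, real j))) \<le> cell_kernel ((a + 2 * b) mod 3) z"
    using cell_kernel_cover[of z "(a + 2 * b) mod 3"] z by (auto simp: z_def)
  have "(1 / real m) *\<^sub>R unskew (real (a + i), real (b + j)) \<in> hex_codebook m"
    using hex_index_cell_corner[OF ab ij] unfolding hex_codebook_def by force
  then have "Min ((\<lambda>p. (norm (x - p))\<^sup>2) ` hex_codebook m)
      \<le> (norm (x - (1 / real m) *\<^sub>R unskew (real (a + i), real (b + j))))\<^sup>2"
    by (simp add: finite_hex_codebook)
  also have "\<dots> = skew_sqnorm (z - (real i, real j)) / (real m)\<^sup>2"
    using m by (simp add: sqdist_scaled_unskew y_def[symmetric] z_def diff_diff_eq)
  finally have "ennreal (Min ((\<lambda>p. (norm (x - p))\<^sup>2) ` hex_codebook m))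
      \<le> ennreal (1 / (real m)\<^sup>2 * skew_sqnorm (z - (real i, real j)))"
    by (intro ennreal_leI) simp
  also have "\<dots> = ennreal (1 / (real m)\<^sup>2) * ennreal (skew_sqnorm (z - (real i, real j)))"
    by (simp add: ennreal_mult[symmetric] skew_sqnorm_nonneg)
  also have "\<dots> \<le> ennreal (1 / (real m)\<^sup>2) * cover_kernel m y"
  proof (rule mult_left_mono)
    have "cell_kernel ((a + 2 * b) mod 3) z \<le> cover_kernel m y"
      unfolding cover_kernel_def z_def
      using member_le_sum[OF ab, of "\<lambda>(a, b). cell_kernel ((a + 2 * b) mod 3) (y - (real a, real b))"]
      by (simp add: finite_simplex_cells)
    with cover show "ennreal (skew_sqnorm (z - (real i, real j))) \<le> cover_kernel m y"
      by simp
  qed simp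
  finally show ?thesis by (simp add: y_def)
qed

lemma cover_kernel_measurable [measurable]: "cover_kernel m \<in> borel_measurable borel"
  unfolding cover_kernel_def by measurable

lemma nn_integral_cover_kernel:
  "(\<integral>\<^sup>+y. cover_kernel m y \<partial>lborel) = of_nat (card (simplex_cells m)) * ennreal (5/12)"
  by (simp add: cover_kernel_def nn_integral_sum case_prod_beta
      nn_integral_lborel_translate[of "cell_kernel _"] nn_integral_cell_kernel)

lemma triangle_measurable [measurable]: "triangle \<in> sets borel"
  unfolding triangle_def
  by (intro borel_closed compact_imp_closed compact_convex_hull finite_imp_compact) simp

lemma distortion_hex_codebook_le:
  assumes m: "m \<ge> 1"
  shows "distortion unif_triangle (hex_codebook m) \<le> 5 * real (card (simplex_cells m)) / (6 * real m ^ 4)"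
proof -
  define M where "M x = Min ((\<lambda>p. (norm (x - p))\<^sup>2) ` hex_codebook m)" for x
  have M_nonneg: "0 \<le> M x" for x
    unfolding M_def using finite_hex_codebook hex_codebook_nonempty by (subst Min_ge_iff) auto
  have [measurable]: "M \<in> borel_measurable borel"
    unfolding M_def
    by (intro borel_measurable_Min finite_hex_codebook borel_measurable_continuous_onI continuous_intros)
  have [measurable]: "(\<lambda>x. cover_kernel m (real m *\<^sub>R skew x)) \<in> borel_measurable borel"
    unfolding skew_def by (subst borel_prod[symmetric]) measurable
  have "(\<integral>\<^sup>+x. ennreal (M x) \<partial>unif_triangle)
      = (\<integral>\<^sup>+x. ennreal (4 / sqrt 3 * indicator triangle x) * ennreal (M x) \<partial>lborel)"
    unfolding unif_triangle_def by (rule nn_integral_density) auto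
  also have "\<dots> \<le> (\<integral>\<^sup>+x. ennreal (4 / sqrt 3) * (ennreal (1 / (real m)\<^sup>2) * cover_kernel m (real m *\<^sub>R skew x)) \<partial>lborel)"
    by (intro nn_integral_mono)
       (auto simp: indicator_def M_def intro: mult_left_mono sqdist_hex_codebook_le_cover_kernel[OF m])
  also have "\<dots> = ennreal (4 / sqrt 3) * (ennreal (1 / (real m)\<^sup>2)
      * (ennreal (sqrt 3 / (2 * (real m)\<^sup>2)) * (of_nat (card (simplex_cells m)) * ennreal (5/12))))"
    using m by (simp add: nn_integral_cmult nn_integral_scaled_skew nn_integral_cover_kernel)
  also have "\<dots> = ennreal (5 * real (card (simplex_cells m)) / (6 * real m ^ 4))"
    using m by (simp add: ennreal_of_nat_eq_real_of_nat power2_eq_square power4_eq_xxxx field_simps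
        flip: ennreal_mult)
  finally have "(\<integral>\<^sup>+x. ennreal (M x) \<partial>unif_triangle) \<le> ennreal (5 * real (card (simplex_cells m)) / (6 * real m ^ 4))" .
  moreover have "distortion unif_triangle (hex_codebook m) = enn2real (\<integral>\<^sup>+x. ennreal (M x) \<partial>unif_triangle)"
    unfolding distortion_def M_def[symmetric]
    by (rule integral_eq_nn_integral) (auto simp: unif_triangle_def M_nonneg)
  ultimately show ?thesis
    by (simp add: enn2real_leI)
qed

section \<open>Counting\<close>

lemma card_le_div_if_mod_eq:
  fixes q :: nat
  assumes "A \<subseteq> {..n}" and "\<And>i j. i \<in> A \<Longrightarrow> j \<in> A \<Longrightarrow> i mod q = j mod q"
  shows "card A \<le> n div q + 1"
proof -
  have "inj_on (\<lambda>i. i div q) A"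
  proof (rule inj_onI)
    fix i j assume "i \<in> A" "j \<in> A" "i div q = j div q"
    then show "i = j" using assms(2) div_mult_mod_eq by metis
  qed
  moreover have "(\<lambda>i. i div q) ` A \<subseteq> {..n div q}"
    using assms(1) by (auto intro: div_le_mono)
  ultimately have "card A \<le> card {..n div q}"
    by (rule card_inj_on_le) simp
  then show ?thesis by simp
qed

lemma sum_atMost_reflect:
  fixes f :: "nat \<Rightarrow> 'a::comm_monoid_add"
  shows "(\<Sum>j\<le>M. f (M - j)) = (\<Sum>k\<le>M. f k)"
  using sum.atLeastAtMost_rev[of f 0 M] by (simp add: atLeast0AtMost)

lemma card_simplex_cells: "2 * card (simplex_cells m) = (m + 1) * (m + 2)"
proof -
  have "simplex_cells m = (SIGMA a:{..m}. {..m - a})"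
    by (auto simp: simplex_cells_def)
  then have "card (simplex_cells m) = (\<Sum>k\<le>m. k + 1)"
    using sum_atMost_reflect[of "\<lambda>k. k + 1" m] by simp
  moreover have "2 * (\<Sum>k\<le>m. k + 1) = (m + 1) * (m + 2)"
    by (induction m) auto
  ultimately show ?thesis by simp
qed

lemma card_hex_index: "6 * card (hex_index M) \<le> (M + 1) * (M + 6)"
proof -
  define R where "R j = {i. i \<le> M - j \<and> i mod 3 = j mod 3}" for j
  have "hex_index M = (\<Union>j\<le>M. (\<lambda>i. (i, j)) ` R j)"
    by (fastforce simp: hex_index_def R_def)
  then have "card (hex_index M) \<le> (\<Sum>j\<le>M. card ((\<lambda>i. (i, j)) ` R j))"
    by (simp add: card_UN_le)
  also have "\<dots> \<le> (\<Sum>j\<le>M. (M - j) div 3 + 1)"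
  proof (rule sum_mono)
    fix j
    have "card ((\<lambda>i. (i, j)) ` R j) \<le> card (R j)" by (rule card_image_le) (simp add: R_def)
    also have "\<dots> \<le> (M - j) div 3 + 1" by (rule card_le_div_if_mod_eq) (auto simp: R_def)
    finally show "card ((\<lambda>i. (i, j)) ` R j) \<le> (M - j) div 3 + 1" .
  qed
  also have "\<dots> = (\<Sum>k\<le>M. k div 3 + 1)"
    by (rule sum_atMost_reflect)
  finally have "6 * card (hex_index M) \<le> 6 * (\<Sum>k\<le>M. k div 3 + 1)" by simp
  also have "6 * (\<Sum>k\<le>M. k div 3 + 1) \<le> (M + 1) * (M + 6)"
  proof (induction M)
    case (Suc M)
    have "6 * (Suc M div 3) \<le> 2 * Suc M"
      using div_times_less_eq_dividend[of "Suc M" 3] by simp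
    with Suc.IH show ?case by (simp add: algebra_simps)
  qed simp
  finally show ?thesis .
qed

lemma card_hex_codebook: "6 * card (hex_codebook m) \<le> (m + 3) * (m + 8)"
proof -
  have "card (hex_codebook m) \<le> card (hex_index (m + 2))"
    unfolding hex_codebook_def by (rule card_image_le[OF finite_hex_index])
  with card_hex_index[of "m + 2"] show ?thesis by (simp add: algebra_simps)
qed

section \<open>The quantization error\<close>

lemma distortion_nonneg:
  assumes "finite \<alpha>" "\<alpha> \<noteq> {}"
  shows "0 \<le> distortion P \<alpha>"
  unfolding distortion_def using assms
  by (intro Bochner_Integration.integral_nonneg) (subst Min_ge_iff; auto)

lemma quant_error_le_distortion:
  assumes "finite \<alpha>" "\<alpha> \<noteq> {}" "card \<alpha> \<le> n"
  shows "quant_error P n \<le> distortion P \<alpha>"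
  unfolding quant_error_def
proof (rule cInf_lower)
  show "distortion P \<alpha> \<in> {distortion P \<alpha> | \<alpha>. finite \<alpha> \<and> \<alpha> \<noteq> {} \<and> card \<alpha> \<le> n}"
    using assms by blast
  show "bdd_below {distortion P \<alpha> | \<alpha>. finite \<alpha> \<and> \<alpha> \<noteq> {} \<and> card \<alpha> \<le> n}"
    by (rule bdd_belowI[of _ 0]) (auto intro: distortion_nonneg)
qed

lemma quant_error_unif_triangle_le:
  assumes m: "m \<ge> 1" and n: "(m + 3) * (m + 8) \<le> 6 * n"
  shows "quant_error unif_triangle n \<le> 5 * (real m + 1) * (real m + 2) / (12 * real m ^ 4)"
proof -
  have "card (hex_codebook m) \<le> n"
    using card_hex_codebook[of m] n by linarith
  then have "quant_error unif_triangle n \<le> distortion unif_triangle (hex_codebook m)"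
    by (intro quant_error_le_distortion finite_hex_codebook hex_codebook_nonempty)
  also have "\<dots> \<le> 5 * real (card (simplex_cells m)) / (6 * real m ^ 4)"
    by (rule distortion_hex_codebook_le[OF m])
  also have "real (card (simplex_cells m)) = (real m + 1) * (real m + 2) / 2"
    using arg_cong[OF card_simplex_cells[of m], of real] by (simp add: algebra_simps)
  finally show ?thesis by (simp add: field_simps)
qed

lemma error_bound_antimono:
  fixes s t :: real
  assumes "0 < t" "t \<le> s"
  shows "5 * (s + 1) * (s + 2) / (12 * s ^ 4) \<le> 5 * (t + 1) * (t + 2) / (12 * t ^ 4)"
proof -
  have expand: "5 * (x + 1) * (x + 2) / (12 * x ^ 4) = 5/12 * (1 / x\<^sup>2 + 3 / x ^ 3 + 2 / x ^ 4)"
    if "x > 0" for x :: real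
    using that by (simp add: field_simps power2_eq_square power3_eq_cube power4_eq_xxxx)
  have "1 / s\<^sup>2 \<le> 1 / t\<^sup>2" "3 / s ^ 3 \<le> 3 / t ^ 3" "2 / s ^ 4 \<le> 2 / t ^ 4"
    using assms by (auto intro!: divide_left_mono power_mono)
  moreover have "0 < s" using assms by simp
  ultimately show ?thesis
    using assms by (simp only: expand) (intro mult_left_mono add_mono; simp)
qed

lemma quant_error_unif_triangle_le_sqrt:
  fixes n :: nat
  defines "s \<equiv> sqrt (6 * real n)"
  assumes s: "10 \<le> s"
  shows "quant_error unif_triangle n \<le> 5 * (s - 8) * (s - 7) / (12 * (s - 9) ^ 4)"
proof -
  define k where "k = nat \<lfloor>s\<rfloor>"
  have k: "real k \<le> s" "s < real k + 1"
    using s unfolding k_def by linarith+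
  define m where "m = k - 8"
  have k10: "k \<ge> 10" using k s by linarith
  then have m: "m \<ge> 1" "real m = real k - 8"
    by (auto simp: m_def)
  have "real k * real k \<le> s * s"
    using k s by (intro mult_mono) auto
  also have "s * s = 6 * real n"
    by (simp add: s_def)
  finally have "k * k \<le> 6 * n"
    using of_nat_le_iff[of "k * k" "6 * n", where 'a = real] by simp
  moreover have "(m + 3) * (m + 8) \<le> k * k"
    using k10 mult_le_mono1[of "m + 3" k "m + 8"] by (simp add: m_def)
  ultimately have "(m + 3) * (m + 8) \<le> 6 * n"
    by linarith
  then have "quant_error unif_triangle n \<le> 5 * (real m + 1) * (real m + 2) / (12 * real m ^ 4)"
    by (rule quant_error_unif_triangle_le[OF m(1)])
  also have "\<dots> \<le> 5 * (s - 9 + 1) * (s - 9 + 2) / (12 * (s - 9) ^ 4)"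
    by (rule error_bound_antimono) (use s k m in auto)
  also have "\<dots> = 5 * (s - 8) * (s - 7) / (12 * (s - 9) ^ 4)"
    by (simp add: algebra_simps)
  finally show ?thesis .
qed

lemma eventually_sqrt_error_bound:
  obtains c where "\<forall>\<^sub>F n in sequentially. 10 \<le> sqrt (6 * real n) \<and>
    5 * (sqrt (6 * real n) - 8) * (sqrt (6 * real n) - 7) / (12 * (sqrt (6 * real n) - 9) ^ 4)
      \<le> 5 / (72 * real n) + c * real n powr (-3/2)"
proof -
  define g :: "real \<Rightarrow> real" where
    "g x = 5 * (sqrt x - 8) * (sqrt x - 7) / (12 * (sqrt x - 9) ^ 4) - 5 / (12 * x)" for x
  have "g \<in> O(\<lambda>x. x powr (-3/2))"
    unfolding g_def by real_asymp
  then obtain c where "\<forall>\<^sub>F x in at_top. norm (g x) \<le> c * norm (x powr (-3/2))"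
    by (elim landau_o.bigE)
  then have "\<forall>\<^sub>F x in at_top. g x \<le> c * x powr (-3/2)"
    by (rule eventually_mono) simp
  moreover have "\<forall>\<^sub>F x in at_top. 10 \<le> sqrt x"
    using eventually_ge_at_top[of 100] by (rule eventually_mono) (simp add: real_le_rsqrt)
  ultimately have "\<forall>\<^sub>F x in at_top. g x \<le> c * x powr (-3/2) \<and> 10 \<le> sqrt x"
    by (rule eventually_conj)
  moreover have "filterlim (\<lambda>n::nat. 6 * real n) at_top sequentially"
    by real_asymp
  ultimately have "\<forall>\<^sub>F n in sequentially. g (6 * real n) \<le> c * (6 * real n) powr (-3/2) \<and> 10 \<le> sqrt (6 * real n)"
    by (rule eventually_compose_filterlim)
  then have "\<forall>\<^sub>F n in sequentially. 10 \<le> sqrt (6 * real n) \<and>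
    5 * (sqrt (6 * real n) - 8) * (sqrt (6 * real n) - 7) / (12 * (sqrt (6 * real n) - 9) ^ 4)
      \<le> 5 / (72 * real n) + c * 6 powr (-3/2) * real n powr (-3/2)"
    by (rule eventually_mono) (simp add: g_def powr_mult)
  then show ?thesis by (rule that)
qed

theorem corollary6p4:
  shows "\<exists>C::real. \<exists>N::nat. \<forall>n\<ge>N.
           quant_error unif_triangle n \<le> 5 / (72 * real n) + C * real n powr (-3/2)"
proof -
  obtain c N where "\<And>n. n \<ge> N \<Longrightarrow> 10 \<le> sqrt (6 * real n) \<and>
    5 * (sqrt (6 * real n) - 8) * (sqrt (6 * real n) - 7) / (12 * (sqrt (6 * real n) - 9) ^ 4)
      \<le> 5 / (72 * real n) + c * real n powr (-3/2)"
    using eventually_sqrt_error_bound unfolding eventually_sequentially by metis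
  then have "quant_error unif_triangle n \<le> 5 / (72 * real n) + c * real n powr (-3/2)" if "n \<ge> N" for n
    using quant_error_unif_triangle_le_sqrt[of n] that by fastforce
  then show ?thesis by blast
qed

end
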